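(* Let $r_0\in\,]0,1[$, $A=\{z\in\mathbb{C}: r_0<|z|<1\}$, let $E\subset\partial A=\mathbb{T}\cup r_0\mathbb{T}$ be closed and of arclength measure $0$, let $f\colon E\to\mathbb{C}$ be continuous, and let $M\colon\partial A\to\,]0,\infty]$ be continuous with $|f|<M$ on $E$. Then there exists a continuous function $F$ on $\overline{A}$ that is holomorphic on $A$, with $|F|<M$ on $\partial A$ and $F|_E=f$.
   Context: $\mathbb{T}=\{z\in\mathbb{C}:|z|=1\}$. A set $E\subset\partial A$ has arclength measure $0$ if both $E\cap\mathbb{T}$ and $E\cap r_0\mathbb{T}$ have arclength measure $0$. *)

theory Defs
  imports "HOL-Complex_Analysis.Complex_Analysis" "HOL-Library.Extended_Real"
begin

text \<open>Arclength measure zero on the circle of radius r centred at 0: the preimage under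
  the arclength-proportional parametrisation t \<mapsto> r e^{it}, t in [0, 2 pi], is a
  Lebesgue null set.\<close>
definition circle_null :: "real \<Rightarrow> complex set \<Rightarrow> bool" where
  "circle_null r S \<longleftrightarrow>
     {t \<in> {0..2*pi}. complex_of_real r * cis t \<in> S} \<in> null_sets lborel"

definition annulus_bdry_null :: "real \<Rightarrow> complex set \<Rightarrow> bool" where
  "annulus_bdry_null r0 E \<longleftrightarrow>
     circle_null 1 (E \<inter> sphere 0 1) \<and> circle_null r0 (E \<inter> sphere 0 r0)"

end

(*
  A closed set E that is null on both boundary circles can be covered by finitely many discs
  centred on E of arbitrarily small total radius.  For a disc (p, \<rho>) the function
  w = 1 - z/p (outer circle) or w = 1 - p/z (inner circle) maps the closed annulus into the right
  half-plane and vanishes only at p, so the kernel c/(c + w) has real part \<ge> 1/4 near p and is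
  of size \<le> c/|z - p| far from p.  The scaled sum \<phi> of these kernels has large real part on E
  and is small away from E, and \<phi>/(1 + \<phi>) is a peak function: bounded by 1, close to 1 on E and
  close to 0 on any closed set disjoint from E.

  On each circle a polynomial in Re z and Im z coincides with a Laurent polynomial, so
  Stone-Weierstrass and peak functions approximate f uniformly on E by holomorphic functions;
  multiplying by one more peak function keeps the approximant below M on the whole boundary.
  Applying this bounded approximation repeatedly to the remaining error with geometrically
  shrinking bounds, and using the maximum modulus principle for uniform convergence on the closed
  annulus, gives an exact interpolant.
*)
theory Submission
  imports Defs
begin

section \<open>The annulus algebra\<close>

abbreviation closed_annulus :: "real \<Rightarrow> complex set" where
  "closed_annulus r0 \<equiv> {z. r0 \<le> cmod z \<and> cmod z \<le> 1}"

abbreviation open_annulus :: "real \<Rightarrow> complex set" where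
  "open_annulus r0 \<equiv> {z. r0 < cmod z \<and> cmod z < 1}"

abbreviation annulus_boundary :: "real \<Rightarrow> complex set" where
  "annulus_boundary r0 \<equiv> sphere 0 1 \<union> sphere 0 r0"

definition annulus_algebra :: "real \<Rightarrow> (complex \<Rightarrow> complex) set" where
  "annulus_algebra r0 =
     {F. continuous_on (closed_annulus r0) F \<and> F holomorphic_on open_annulus r0}"

lemma closed_annulus_eq_Diff: "closed_annulus r0 = cball 0 1 - ball 0 r0"
  by auto

lemma open_annulus_eq_Diff: "open_annulus r0 = ball 0 1 - cball 0 r0"
  by auto

lemma compact_closed_annulus: "compact (closed_annulus r0)"
  unfolding closed_annulus_eq_Diff by (simp add: compact_diff)

lemma open_open_annulus: "open (open_annulus r0)"
  unfolding open_annulus_eq_Diff by (simp add: open_Diff)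

lemma open_annulus_subset_closed_annulus: "open_annulus r0 \<subseteq> closed_annulus r0"
  by auto

lemma interior_closed_annulus:
  "0 < r0 \<Longrightarrow> interior (closed_annulus r0) = open_annulus r0"
  unfolding closed_annulus_eq_Diff open_annulus_eq_Diff interior_diff by simp

lemma closed_closed_annulus: "closed (closed_annulus r0)"
  by (simp add: compact_imp_closed compact_closed_annulus)

lemma frontier_closed_annulus:
  assumes "0 < r0" "r0 < 1"
  shows "frontier (closed_annulus r0) = annulus_boundary r0"
  unfolding frontier_def interior_closed_annulus[OF assms(1)]
    closure_closed[OF closed_closed_annulus]
  using assms by auto

lemma annulus_algebra_add:
  "F \<in> annulus_algebra r0 \<Longrightarrow> G \<in> annulus_algebra r0 \<Longrightarrow> (\<lambda>z. F z + G z) \<in> annulus_algebra r0"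
  unfolding annulus_algebra_def by (auto intro: continuous_intros holomorphic_intros)

lemma annulus_algebra_diff:
  "F \<in> annulus_algebra r0 \<Longrightarrow> G \<in> annulus_algebra r0 \<Longrightarrow> (\<lambda>z. F z - G z) \<in> annulus_algebra r0"
  unfolding annulus_algebra_def by (auto intro: continuous_intros holomorphic_intros)

lemma annulus_algebra_mult:
  "F \<in> annulus_algebra r0 \<Longrightarrow> G \<in> annulus_algebra r0 \<Longrightarrow> (\<lambda>z. F z * G z) \<in> annulus_algebra r0"
  unfolding annulus_algebra_def by (auto intro: continuous_intros holomorphic_intros)

lemma annulus_algebra_sum:
  "finite I \<Longrightarrow> (\<And>i. i \<in> I \<Longrightarrow> F i \<in> annulus_algebra r0)
    \<Longrightarrow> (\<lambda>z. \<Sum>i\<in>I. F i z) \<in> annulus_algebra r0"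
  unfolding annulus_algebra_def by (auto intro: continuous_on_sum holomorphic_on_sum)

lemma holomorphic_on_punctured_plane_in_annulus_algebra:
  assumes "0 < r0" "F holomorphic_on - {0}"
  shows "F \<in> annulus_algebra r0"
proof -
  have "closed_annulus r0 \<subseteq> - {0}" using assms(1) by auto
  then show ?thesis
    using assms(2) unfolding annulus_algebra_def
    by (auto intro: holomorphic_on_subset continuous_on_subset holomorphic_on_imp_continuous_on)
qed

lemma annulus_algebra_bounded:
  assumes "F \<in> annulus_algebra r0"
  obtains H where "0 < H" "\<And>z. z \<in> closed_annulus r0 \<Longrightarrow> norm (F z) \<le> H"
proof -
  have "bounded (F ` closed_annulus r0)"
    using assms unfolding annulus_algebra_def
    by (intro compact_imp_bounded compact_continuous_image compact_closed_annulus) auto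
  then show ?thesis using that by (auto simp: bounded_pos)
qed

lemma annulus_algebra_maximum_modulus:
  assumes "0 < r0" "r0 < 1" "F \<in> annulus_algebra r0"
    and "\<And>z. z \<in> annulus_boundary r0 \<Longrightarrow> norm (F z) \<le> b" and "z \<in> closed_annulus r0"
  shows "norm (F z) \<le> b"
proof (rule maximum_modulus_frontier[where f = F and S = "closed_annulus r0"])
  show "bounded (closed_annulus r0)"
    by (rule compact_imp_bounded[OF compact_closed_annulus])
qed (use assms in \<open>auto simp: annulus_algebra_def interior_closed_annulus
                         frontier_closed_annulus closed_closed_annulus\<close>)

lemma annulus_algebra_uniform_limit:
  assumes G: "\<And>n. G n \<in> annulus_algebra r0"
    and lim: "uniform_limit (closed_annulus r0) G L sequentially"
  shows "L \<in> annulus_algebra r0"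
  unfolding annulus_algebra_def
proof (intro CollectI conjI)
  have "\<forall>\<^sub>F n in sequentially. continuous_on (closed_annulus r0) (G n)"
    using G by (simp add: annulus_algebra_def)
  then show "continuous_on (closed_annulus r0) L"
    by (rule uniform_limit_theorem[OF _ lim]) simp
  show "L holomorphic_on open_annulus r0"
  proof (rule holomorphic_uniform_sequence[OF open_open_annulus])
    show "G n holomorphic_on open_annulus r0" for n
      using G by (simp add: annulus_algebra_def)
    fix x assume x: "x \<in> open_annulus r0"
    obtain d where d: "0 < d" "cball x d \<subseteq> open_annulus r0"
      using open_contains_cball[THEN iffD1, OF open_open_annulus, rule_format, OF x] by blast
    moreover have "uniform_limit (cball x d) G L sequentially"
      using uniform_limit_on_subset[OF lim order_trans[OF d(2) open_annulus_subset_closed_annulus]] .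
    ultimately show "\<exists>d>0. cball x d \<subseteq> open_annulus r0 \<and> uniform_limit (cball x d) G L sequentially"
      by blast
  qed
qed

lemma annulus_algebra_Cauchy_limit:
  assumes "0 < r0" "r0 < 1" and G: "\<And>n. G n \<in> annulus_algebra r0"
    and inc: "\<And>n z. z \<in> annulus_boundary r0 \<Longrightarrow> norm (G (Suc n) z - G n z) \<le> c n"
    and "summable c"
  obtains L where "L \<in> annulus_algebra r0"
    "\<And>z. z \<in> closed_annulus r0 \<Longrightarrow> (\<lambda>n. G n z) \<longlonglongrightarrow> L z"
proof -
  define u where "u k z = G (Suc k) z - G k z" for k z
  have u: "u k \<in> annulus_algebra r0" for k
    unfolding u_def by (intro annulus_algebra_diff G)
  have "norm (u k z) \<le> c k" if "z \<in> closed_annulus r0" for k z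
    by (rule annulus_algebra_maximum_modulus[OF assms(1,2) u _ that]) (simp add: u_def inc)
  then have lim: "uniform_limit (closed_annulus r0) (\<lambda>n z. \<Sum>k<n. u k z) (\<lambda>z. \<Sum>k. u k z) sequentially"
    by (rule Weierstrass_m_test[OF _ \<open>summable c\<close>])
  have "(\<lambda>z. \<Sum>k. u k z) \<in> annulus_algebra r0"
    by (rule annulus_algebra_uniform_limit[OF _ lim]) (simp add: annulus_algebra_sum u)
  then have "(\<lambda>z. G 0 z + (\<Sum>k. u k z)) \<in> annulus_algebra r0"
    by (intro annulus_algebra_add G)
  moreover have "(\<lambda>n. G n z) \<longlonglongrightarrow> G 0 z + (\<Sum>k. u k z)" if "z \<in> closed_annulus r0" for z
  proof -
    have telescope: "(\<Sum>k<n. u k z) = G n z - G 0 z" for n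
      unfolding u_def by (rule sum_lessThan_telescope)
    show ?thesis
      using tendsto_add[OF tendsto_const tendsto_uniform_limitI[OF lim that], of "G 0 z"]
      by (simp add: telescope)
  qed
  ultimately show ?thesis using that by blast
qed

section \<open>Laurent polynomials on circles\<close>

lemma cnj_on_sphere:
  assumes "z \<in> sphere 0 r" "0 < r"
  shows "cnj z = of_real (r\<^sup>2) / z"
proof -
  have "z \<noteq> 0" using assms by auto
  then show ?thesis
    using assms by (simp add: field_simps complex_norm_square[symmetric] flip: of_real_power)
qed

lemma real_polynomial_function_on_sphere_holomorphic:
  fixes h :: "complex \<Rightarrow> real"
  assumes "real_polynomial_function h" "0 < r"
  shows "\<exists>P. P holomorphic_on - {0} \<and> (\<forall>z\<in>sphere 0 r. P z = of_real (h z))"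
  using assms(1)
proof (induction h rule: real_polynomial_function.induct)
  case (linear h)
  have h: "h z = Re z * h 1 + Im z * h \<i>" for z
  proof -
    have "z = Re z *\<^sub>R 1 + Im z *\<^sub>R \<i>"
      by (simp add: complex_eq_iff)
    then have "h z = h (Re z *\<^sub>R 1 + Im z *\<^sub>R \<i>)"
      by simp
    also have "\<dots> = Re z * h 1 + Im z * h \<i>"
      using linear.hyps by (simp add: linear_add linear_scale bounded_linear.linear)
    finally show ?thesis .
  qed
  define c where "c = complex_of_real (r\<^sup>2)"
  define P where "P z = (z + c / z) / 2 * of_real (h 1) + (z - c / z) / (2 * \<i>) * of_real (h \<i>)"
    for z
  have "P holomorphic_on - {0}"
    unfolding P_def by (intro holomorphic_intros) auto
  moreover have "P z = of_real (h z)" if "z \<in> sphere 0 r" for z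
  proof -
    have "cnj z = c / z"
      unfolding c_def by (rule cnj_on_sphere[OF that assms(2)])
    then have "of_real (Re z) = (z + c / z) / 2" "of_real (Im z) = (z - c / z) / (2 * \<i>)"
      using complex_add_cnj[of z] complex_diff_cnj[of z] by (simp_all add: field_simps)
    then show ?thesis
      unfolding P_def h[of z] by simp
  qed
  ultimately show ?case by blast
next
  case (const c)
  show ?case by (intro exI[of _ "\<lambda>_. of_real c"]) auto
next
  case (add f g)
  then obtain P Q where "P holomorphic_on - {0}" "\<forall>z\<in>sphere 0 r. P z = of_real (f z)"
    "Q holomorphic_on - {0}" "\<forall>z\<in>sphere 0 r. Q z = of_real (g z)"
    by blast
  then show ?case by (intro exI[of _ "\<lambda>z. P z + Q z"]) (auto intro: holomorphic_intros)
next
  case (mult f g)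
  then obtain P Q where "P holomorphic_on - {0}" "\<forall>z\<in>sphere 0 r. P z = of_real (f z)"
    "Q holomorphic_on - {0}" "\<forall>z\<in>sphere 0 r. Q z = of_real (g z)"
    by blast
  then show ?case by (intro exI[of _ "\<lambda>z. P z * Q z"]) (auto intro: holomorphic_intros)
qed

lemma polynomial_function_on_sphere_holomorphic:
  fixes g :: "complex \<Rightarrow> complex"
  assumes "polynomial_function g" "0 < r"
  obtains P where "P holomorphic_on - {0}" "\<And>z. z \<in> sphere 0 r \<Longrightarrow> P z = g z"
proof -
  have Re: "real_polynomial_function (Re \<circ> g)" and Im: "real_polynomial_function (Im \<circ> g)"
    using assms(1) bounded_linear_Re bounded_linear_Im unfolding polynomial_function_def by blast+
  obtain P where P: "P holomorphic_on - {0}" "\<forall>z\<in>sphere 0 r. P z = of_real ((Re \<circ> g) z)"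
    using real_polynomial_function_on_sphere_holomorphic[OF Re assms(2)] by blast
  obtain Q where Q: "Q holomorphic_on - {0}" "\<forall>z\<in>sphere 0 r. Q z = of_real ((Im \<circ> g) z)"
    using real_polynomial_function_on_sphere_holomorphic[OF Im assms(2)] by blast
  show ?thesis
  proof
    show "(\<lambda>z. P z + \<i> * Q z) holomorphic_on - {0}"
      using P(1) Q(1) by (intro holomorphic_intros)
    show "P z + \<i> * Q z = g z" if "z \<in> sphere 0 r" for z
      using P(2) Q(2) that complex_eq[of "g z"] by simp
  qed
qed

section \<open>Finite disc covers of null boundary sets\<close>

lemma negligible_closed_tagged_division:
  fixes S :: "'a::euclidean_space set"
  assumes "closed S" "negligible S" "0 < e"
  obtains \<D> where "\<D> tagged_division_of cbox a b"
    "\<And>x K. (x, K) \<in> \<D> \<Longrightarrow> K \<inter> S \<noteq> {} \<Longrightarrow> x \<in> S"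
    "(\<Sum>(x, K)\<in>\<D>. measure lborel K * indicator S x) < e"
proof -
  have "(indicator S has_integral (0::real)) (cbox a b)"
    using assms(2) by (simp add: negligible_def)
  then obtain \<gamma> where "gauge \<gamma>" and \<gamma>: "\<And>\<D>. \<D> tagged_division_of cbox a b \<Longrightarrow> \<gamma> fine \<D> \<Longrightarrow>
      norm ((\<Sum>(x, K)\<in>\<D>. measure lborel K *\<^sub>R (indicator S x :: real)) - 0) < e"
    using assms(3) unfolding has_integral by meson
  text \<open>Shrinking the gauge to \<open>-S\<close> at points outside \<open>S\<close> ensures that only cells
    tagged in \<open>S\<close> meet \<open>S\<close>.\<close>
  define \<gamma>' where "\<gamma>' x = (if x \<in> S then UNIV else - S)" for x
  have "gauge \<gamma>'"
    using assms(1) unfolding gauge_def \<gamma>'_def by auto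
  then obtain \<D> where \<D>: "\<D> tagged_division_of cbox a b" "(\<lambda>x. \<gamma> x \<inter> \<gamma>' x) fine \<D>"
    using fine_division_exists[OF gauge_Int[OF \<open>gauge \<gamma>\<close>]] by blast
  then have "\<gamma> fine \<D>" "\<gamma>' fine \<D>"
    by (simp_all add: fine_Int)
  show ?thesis
  proof
    show "\<D> tagged_division_of cbox a b" by (fact \<D>(1))
    show "x \<in> S" if "(x, K) \<in> \<D>" "K \<inter> S \<noteq> {}" for x K
    proof -
      have "K \<subseteq> \<gamma>' x"
        using \<open>\<gamma>' fine \<D>\<close> that(1) unfolding fine_def by blast
      then show ?thesis
        using that(2) unfolding \<gamma>'_def by (auto split: if_splits)
    qed
    have "\<bar>\<Sum>(x, K)\<in>\<D>. measure lborel K * indicator S x\<bar> < e"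
      using \<gamma>[OF \<D>(1) \<open>\<gamma> fine \<D>\<close>] by simp
    then show "(\<Sum>(x, K)\<in>\<D>. measure lborel K * indicator S x) < e"
      by linarith
  qed
qed

lemma negligible_closed_finite_ball_cover:
  fixes S :: "real set"
  assumes "closed S" "S \<subseteq> {a..b}" "negligible S" "0 < e"
  obtains T where "finite T" "T \<subseteq> S \<times> {0<..}"
    "S \<subseteq> (\<Union>(t, l)\<in>T. ball t l)" "(\<Sum>(t, l)\<in>T. l) < e"
proof -
  obtain \<D> where \<D>: "\<D> tagged_division_of {a..b}"
    and tag: "\<And>x K. (x, K) \<in> \<D> \<Longrightarrow> K \<inter> S \<noteq> {} \<Longrightarrow> x \<in> S"
    and small: "(\<Sum>(x, K)\<in>\<D>. measure lborel K * indicator S x) < e / 2"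
    using negligible_closed_tagged_division[OF assms(1,3), of "e / 2" a b] assms(4) by auto
  have "finite \<D>"
    using \<D> by blast
  define \<eta> where "\<eta> = e / (2 * (card \<D> + 1))"
  have "0 < \<eta>"
    using assms(4) by (simp add: \<eta>_def)
  define \<D>\<^sub>S where "\<D>\<^sub>S = {d \<in> \<D>. fst d \<in> S}"
  have "finite \<D>\<^sub>S"
    using \<open>finite \<D>\<close> by (rule rev_finite_subset) (auto simp: \<D>\<^sub>S_def)
  define T where "T = (\<lambda>(x, K). (x, measure lborel K + \<eta>)) ` \<D>\<^sub>S"
  show ?thesis
  proof
    show "finite T"
      using \<open>finite \<D>\<^sub>S\<close> by (simp add: T_def)
    show "T \<subseteq> S \<times> {0<..}"
      using \<open>0 < \<eta>\<close> by (auto simp: T_def \<D>\<^sub>S_def add_nonneg_pos)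
    show "S \<subseteq> (\<Union>(t, l)\<in>T. ball t l)"
    proof
      fix s assume "s \<in> S"
      then have "s \<in> \<Union>{K. \<exists>x. (x, K) \<in> \<D>}"
        using assms(2) tagged_division_ofD(6)[OF \<D>] by auto
      then obtain x K where xK: "(x, K) \<in> \<D>" "s \<in> K" by blast
      then have "x \<in> S" using tag \<open>s \<in> S\<close> by blast
      obtain u v where K: "K = cbox u v" using tagged_division_ofD(4)[OF \<D> xK(1)] by blast
      have "x \<in> K" using tagged_division_ofD(2)[OF \<D> xK(1)] .
      then have "dist s x \<le> measure lborel K"
        using xK(2) by (auto simp: K dist_real_def)
      then have "s \<in> ball x (measure lborel K + \<eta>)"
        using \<open>0 < \<eta>\<close> by (simp add: dist_commute)
      moreover have "(x, measure lborel K + \<eta>) \<in> T"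
        using xK(1) \<open>x \<in> S\<close> by (force simp: T_def \<D>\<^sub>S_def)
      ultimately show "s \<in> (\<Union>(t, l)\<in>T. ball t l)" by blast
    qed
    have "(\<Sum>(t, l)\<in>T. l) \<le> (\<Sum>(x, K)\<in>\<D>\<^sub>S. measure lborel K + \<eta>)"
      unfolding T_def
      by (rule order_trans[OF sum_image_le[OF \<open>finite \<D>\<^sub>S\<close>]])
         (use \<open>0 < \<eta>\<close> in \<open>auto simp: case_prod_beta\<close>)
    also have "\<dots> = (\<Sum>(x, K)\<in>\<D>\<^sub>S. measure lborel K) + card \<D>\<^sub>S * \<eta>"
      by (simp add: sum.distrib case_prod_beta)
    also have "(\<Sum>(x, K)\<in>\<D>\<^sub>S. measure lborel K) = (\<Sum>(x, K)\<in>\<D>. measure lborel K * indicator S x)"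
      unfolding \<D>\<^sub>S_def using \<open>finite \<D>\<close>
      by (simp add: sum.If_cases case_prod_beta indicator_def Int_def)
    also have "card \<D>\<^sub>S * \<eta> \<le> card \<D> * \<eta>"
      using \<open>finite \<D>\<close> \<open>0 < \<eta>\<close> by (simp add: \<D>\<^sub>S_def card_mono)
    also have "card \<D> * \<eta> < e / 2"
      using assms(4) by (simp add: \<eta>_def field_simps)
    finally show "(\<Sum>(t, l)\<in>T. l) < e"
      using small by linarith
  qed
qed

text \<open>Unlike \<open>circle_null\<close>, which asks for a Borel null set, this notion passes to subsets.\<close>

definition circle_negligible :: "real \<Rightarrow> complex set \<Rightarrow> bool" where
  "circle_negligible r S \<longleftrightarrow> negligible {t \<in> {0..2*pi}. complex_of_real r * cis t \<in> S}"

lemma circle_negligible_subset: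
  "circle_negligible r T \<Longrightarrow> S \<subseteq> T \<Longrightarrow> circle_negligible r S"
  unfolding circle_negligible_def by (erule negligible_subset) auto

lemma circle_negligible_disjoint:
  assumes "0 \<le> r" "S \<inter> sphere 0 r = {}"
  shows "circle_negligible r S"
proof -
  have empty: "{t \<in> {0..2*pi}. complex_of_real r * cis t \<in> S} = {}"
    using assms by (auto simp: norm_mult)
  show ?thesis
    unfolding circle_negligible_def empty by simp
qed

lemma circle_null_imp_circle_negligible:
  assumes "0 \<le> r" "circle_null r (S \<inter> sphere 0 r)"
  shows "circle_negligible r S"
proof -
  have "{t \<in> {0..2*pi}. complex_of_real r * cis t \<in> S \<inter> sphere 0 r}
      = {t \<in> {0..2*pi}. complex_of_real r * cis t \<in> S}"
    using assms(1) by (auto simp: norm_mult)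
  then show ?thesis
    using assms(2) unfolding circle_null_def circle_negligible_def
    by (simp add: negligible_iff_null_sets null_sets_completionI)
qed

lemma norm_cis_diff_le: "norm (cis s - cis t) \<le> \<bar>s - t\<bar>"
proof -
  have "(norm (cis s - cis t))\<^sup>2 = (cos s - cos t)\<^sup>2 + (sin s - sin t)\<^sup>2"
    by (simp add: cmod_def)
  also have "\<dots> = 2 - 2 * cos (s - t)"
    unfolding cos_diff power2_diff using sin_cos_squared_add[of s] sin_cos_squared_add[of t]
    by argo
  also have "cos (s - t) = cos (2 * ((s - t) / 2))"
    by (simp only: mult_2 field_sum_of_halves)
  also have "\<dots> = 1 - 2 * (sin ((s - t) / 2))\<^sup>2"
    by (rule cos_double_sin)
  also have "2 - 2 * (1 - 2 * (sin ((s - t) / 2))\<^sup>2) = 4 * (sin ((s - t) / 2))\<^sup>2"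
    by simp
  also have "\<dots> \<le> 4 * ((s - t) / 2)\<^sup>2"
    using abs_sin_x_le_abs_x[of "(s - t) / 2"] abs_le_square_iff by (metis mult_left_mono zero_le_numeral)
  also have "\<dots> = \<bar>s - t\<bar>\<^sup>2"
    by (simp add: power2_eq_square)
  finally show ?thesis
    using abs_ge_zero power2_le_imp_le by blast
qed

lemma circle_finite_disc_cover:
  assumes "0 < r" "closed K" "circle_negligible r K" "0 < e"
  obtains D where "finite D" "D \<subseteq> K \<times> {0<..}"
    "K \<inter> sphere 0 r \<subseteq> (\<Union>(p, \<rho>)\<in>D. ball p \<rho>)" "(\<Sum>(p, \<rho>)\<in>D. \<rho>) < e"
proof -
  define \<gamma> where "\<gamma> = (\<lambda>t. complex_of_real r * cis t)"
  define S where "S = {t \<in> {0..2*pi}. \<gamma> t \<in> K}"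
  have "closed (\<gamma> -` K)"
    by (rule continuous_closed_vimage[OF assms(2)]) (simp add: \<gamma>_def cis_conv_exp continuous_intros)
  moreover have "S = {0..2*pi} \<inter> \<gamma> -` K"
    by (auto simp: S_def)
  ultimately have "closed S"
    by (simp add: closed_Int)
  moreover have "S \<subseteq> {0..2*pi}" "negligible S" "0 < e / r"
    using assms by (auto simp: S_def \<gamma>_def circle_negligible_def)
  ultimately obtain T where T: "finite T" "T \<subseteq> S \<times> {0<..}"
    "S \<subseteq> (\<Union>(t, l)\<in>T. ball t l)" "(\<Sum>(t, l)\<in>T. l) < e / r"
    by (rule negligible_closed_finite_ball_cover)
  define D where "D = (\<lambda>(t, l). (\<gamma> t, r * l)) ` T"
  show ?thesis
  proof
    show "finite D" using T(1) by (simp add: D_def)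
    show "D \<subseteq> K \<times> {0<..}"
      using T(2) assms(1) by (auto simp: D_def S_def)
    show "K \<inter> sphere 0 r \<subseteq> (\<Union>(p, \<rho>)\<in>D. ball p \<rho>)"
    proof
      fix z assume z: "z \<in> K \<inter> sphere 0 r"
      define s where "s = Arg2pi z"
      have "z = \<gamma> s"
        using z Arg2pi_eq[of z] by (simp add: \<gamma>_def s_def cis_conv_exp)
      moreover have "s \<in> {0..2*pi}"
        using Arg2pi_ge_0 Arg2pi_lt_2pi by (simp add: s_def less_imp_le)
      ultimately have "s \<in> S" using z by (simp add: S_def)
      then obtain t l where tl: "(t, l) \<in> T" "dist s t < l"
        using T(3) by (fastforce simp: dist_commute)
      have "dist z (\<gamma> t) = r * norm (cis s - cis t)"
        using \<open>z = \<gamma> s\<close> assms(1)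
        by (simp add: \<gamma>_def dist_norm norm_mult flip: right_diff_distrib)
      also have "\<dots> < r * l"
        using norm_cis_diff_le[of s t] tl(2) assms(1) by (simp add: dist_real_def)
      finally show "z \<in> (\<Union>(p, \<rho>)\<in>D. ball p \<rho>)"
        using tl(1) by (force simp: D_def dist_commute)
    qed
    have "(\<Sum>(p, \<rho>)\<in>D. \<rho>) \<le> (\<Sum>(t, l)\<in>T. r * l)"
      unfolding D_def
      by (rule order_trans[OF sum_image_le[OF T(1)]])
        (use T(2) assms(1) in \<open>auto simp: case_prod_beta\<close>)
    also have "\<dots> < e"
      using T(4) assms(1) by (simp add: sum_distrib_left[symmetric] case_prod_beta field_simps)
    finally show "(\<Sum>(p, \<rho>)\<in>D. \<rho>) < e" .
  qed
qed

lemma annulus_boundary_finite_disc_cover: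
  assumes "0 < r0" "closed K" "K \<subseteq> annulus_boundary r0"
    and "circle_negligible 1 K" "circle_negligible r0 K" "0 < e"
  obtains D where "finite D" "D \<subseteq> K \<times> {0<..}"
    "K \<subseteq> (\<Union>(p, \<rho>)\<in>D. ball p \<rho>)" "(\<Sum>(p, \<rho>)\<in>D. \<rho>) < e"
proof -
  obtain D1 where D1: "finite D1" "D1 \<subseteq> K \<times> {0<..}"
    "K \<inter> sphere 0 1 \<subseteq> (\<Union>(p, \<rho>)\<in>D1. ball p \<rho>)" "(\<Sum>(p, \<rho>)\<in>D1. \<rho>) < e / 2"
    by (rule circle_finite_disc_cover[of 1 K "e / 2"]) (use assms in auto)
  obtain D2 where D2: "finite D2" "D2 \<subseteq> K \<times> {0<..}"
    "K \<inter> sphere 0 r0 \<subseteq> (\<Union>(p, \<rho>)\<in>D2. ball p \<rho>)" "(\<Sum>(p, \<rho>)\<in>D2. \<rho>) < e / 2"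
    by (rule circle_finite_disc_cover[of r0 K "e / 2"]) (use assms in auto)
  show ?thesis
  proof
    show "finite (D1 \<union> D2)" using D1(1) D2(1) by simp
    show "D1 \<union> D2 \<subseteq> K \<times> {0<..}"
      using D1(2) D2(2) by blast
    show "K \<subseteq> (\<Union>(p, \<rho>)\<in>D1 \<union> D2. ball p \<rho>)"
    proof
      fix z assume "z \<in> K"
      then have "z \<in> K \<inter> sphere 0 1 \<or> z \<in> K \<inter> sphere 0 r0"
        using assms(3) by blast
      then show "z \<in> (\<Union>(p, \<rho>)\<in>D1 \<union> D2. ball p \<rho>)"
        unfolding UN_Un using subsetD[OF D1(3)] subsetD[OF D2(3)] by blast
    qed
    have "0 \<le> (\<Sum>(p, \<rho>)\<in>D1 \<inter> D2. \<rho>)"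
      by (rule sum_nonneg) (use D1(2) in \<open>force simp: less_imp_le\<close>)
    then show "(\<Sum>(p, \<rho>)\<in>D1 \<union> D2. \<rho>) < e"
      using sum_Un[OF D1(1) D2(1), of "\<lambda>(p, \<rho>). \<rho>"] D1(4) D2(4) by linarith
  qed
qed

section \<open>Peak functions\<close>

lemma annulus_algebra_const: "(\<lambda>_. c) \<in> annulus_algebra r0"
  unfolding annulus_algebra_def by (auto intro: continuous_intros holomorphic_intros)

lemma annulus_algebra_divide:
  assumes "F \<in> annulus_algebra r0" "G \<in> annulus_algebra r0"
    and "\<And>z. z \<in> closed_annulus r0 \<Longrightarrow> G z \<noteq> 0"
  shows "(\<lambda>z. F z / G z) \<in> annulus_algebra r0"
  using assms open_annulus_subset_closed_annulus unfolding annulus_algebra_def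
  by (auto intro!: continuous_intros holomorphic_intros)

lemma norm_le_norm_of_real_add:
  fixes w :: complex
  assumes "0 \<le> c" "0 \<le> Re w"
  shows "norm w \<le> norm (of_real c + w)"
proof -
  have "(norm w)\<^sup>2 = (Re w)\<^sup>2 + (Im w)\<^sup>2" by (simp add: cmod_power2)
  also have "\<dots> \<le> (c + Re w)\<^sup>2 + (Im w)\<^sup>2" using assms by (simp add: power_mono)
  also have "\<dots> = (norm (of_real c + w))\<^sup>2" by (simp add: cmod_power2)
  finally show ?thesis using power2_le_imp_le norm_ge_zero by blast
qed

lemma of_real_add_neq_zero:
  fixes w :: complex
  assumes "0 < c" "0 \<le> Re w"
  shows "of_real c + w \<noteq> 0"
proof
  assume "of_real c + w = 0"
  then have "Re (of_real c + w) = 0" by simp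
  then show False using assms by simp
qed

lemma Re_of_real_divide_add:
  fixes w :: complex
  shows "Re (of_real c / (of_real c + w)) = c * (c + Re w) / (norm (of_real c + w))\<^sup>2"
  by (simp add: Re_divide' cmod_power2)

lemma Re_of_real_divide_add_nonneg:
  fixes w :: complex
  assumes "0 < c" "0 \<le> Re w"
  shows "0 \<le> Re (of_real c / (of_real c + w))"
  unfolding Re_of_real_divide_add using assms by simp

lemma Re_of_real_divide_add_ge_quarter:
  fixes w :: complex
  assumes "0 < c" "0 \<le> Re w" "norm w < c"
  shows "1 / 4 \<le> Re (of_real c / (of_real c + w))"
proof -
  have pos: "0 < norm (of_real c + w)"
    using of_real_add_neq_zero[OF assms(1,2)] by simp
  have "norm (of_real c + w) \<le> 2 * c"
    using norm_triangle_ineq[of "of_real c" w] assms by simp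
  then have "(norm (of_real c + w))\<^sup>2 \<le> (2 * c)\<^sup>2"
    using pos by (intro power_mono) auto
  also have "\<dots> \<le> 4 * (c * (c + Re w))"
    using assms by (simp add: power2_eq_square mult_left_mono)
  finally show ?thesis
    unfolding Re_of_real_divide_add using pos by (simp add: field_simps)
qed

lemma norm_of_real_divide_add_mult_le:
  fixes w :: complex
  assumes "0 < c" "0 \<le> Re w"
  shows "norm (of_real c / (of_real c + w)) * norm w \<le> c"
proof -
  have "0 < norm (of_real c + w)"
    using of_real_add_neq_zero[OF assms] by simp
  then show ?thesis
    using norm_le_norm_of_real_add[of c w] assms by (simp add: norm_divide field_simps)
qed

lemma norm_divide_one_add_le:
  fixes w :: complex
  assumes "0 \<le> Re w"
  shows "norm (w / (1 + w)) \<le> 1" "norm (w / (1 + w)) \<le> norm w"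
proof -
  have "norm w \<le> norm (1 + w)"
    using norm_le_norm_of_real_add[of 1 w] assms by simp
  moreover have "1 \<le> norm (1 + w)"
    using complex_Re_le_cmod[of "1 + w"] assms by simp
  ultimately show "norm (w / (1 + w)) \<le> 1" "norm (w / (1 + w)) \<le> norm w"
    by (simp_all add: norm_divide divide_le_eq mult_le_cancel_left1 order_trans[OF _ mult_left_mono])
qed

lemma norm_divide_one_add_minus_one_le:
  fixes w :: complex
  assumes "0 \<le> Re w"
  shows "norm (w / (1 + w) - 1) \<le> 1 / (1 + Re w)"
proof -
  have "1 + w \<noteq> 0"
    using of_real_add_neq_zero[of 1 w] assms by simp
  then have "w / (1 + w) - 1 = - 1 / (1 + w)"
    by (simp add: field_simps)
  moreover have "1 + Re w \<le> norm (1 + w)"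
    using complex_Re_le_cmod[of "1 + w"] by simp
  ultimately show ?thesis
    using assms by (simp add: norm_divide frac_le)
qed

lemma outer_half_plane_map:
  assumes "0 < r0" "r0 \<le> 1" "norm p = 1" "z \<in> closed_annulus r0"
  shows "0 \<le> Re (1 - z / p)" "dist z p \<le> norm (1 - z / p)" "norm (1 - z / p) \<le> dist z p / r0"
proof -
  have "p \<noteq> 0" using assms(3) by auto
  have "Re (z / p) \<le> norm (z / p)" by (rule complex_Re_le_cmod)
  also have "\<dots> \<le> 1" using assms(3,4) by (simp add: norm_divide)
  finally show "0 \<le> Re (1 - z / p)" by simp
  have "1 - z / p = (p - z) / p" using \<open>p \<noteq> 0\<close> by (simp add: field_simps)
  then have eq: "norm (1 - z / p) = dist z p"
    using assms(3) by (simp add: norm_divide dist_norm norm_minus_commute)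
  then show "dist z p \<le> norm (1 - z / p)" by simp
  show "norm (1 - z / p) \<le> dist z p / r0"
    unfolding eq using assms(1,2) by (simp add: le_divide_eq mult_left_le)
qed

lemma inner_half_plane_map:
  assumes "0 < r0" "norm p = r0" "z \<in> closed_annulus r0"
  shows "0 \<le> Re (1 - p / z)" "dist z p \<le> norm (1 - p / z)" "norm (1 - p / z) \<le> dist z p / r0"
proof -
  have "0 < norm z" using assms(1,3) by auto
  have "Re (p / z) \<le> norm (p / z)" by (rule complex_Re_le_cmod)
  also have "\<dots> \<le> 1" using assms(2,3) \<open>0 < norm z\<close> by (simp add: norm_divide)
  finally show "0 \<le> Re (1 - p / z)" by simp
  have "1 - p / z = (z - p) / z" using \<open>0 < norm z\<close> by (simp add: field_simps)
  then have eq: "norm (1 - p / z) = dist z p / norm z"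
    by (simp add: norm_divide dist_norm)
  show "dist z p \<le> norm (1 - p / z)"
    unfolding eq using assms(3) \<open>0 < norm z\<close> by (simp add: le_divide_eq mult_left_le)
  show "norm (1 - p / z) \<le> dist z p / r0"
    unfolding eq using assms(1,3) by (simp add: frac_le)
qed

definition annulus_half_plane_map :: "complex \<Rightarrow> complex \<Rightarrow> complex" where
  "annulus_half_plane_map p z = (if norm p = 1 then 1 - z / p else 1 - p / z)"

lemma annulus_half_plane_map_properties:
  assumes r0: "0 < r0" "r0 < 1" and p: "p \<in> annulus_boundary r0"
  shows "annulus_half_plane_map p \<in> annulus_algebra r0"
    and "z \<in> closed_annulus r0 \<Longrightarrow> 0 \<le> Re (annulus_half_plane_map p z)"
    and "z \<in> closed_annulus r0 \<Longrightarrow> dist z p \<le> norm (annulus_half_plane_map p z)"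
    and "z \<in> closed_annulus r0 \<Longrightarrow> norm (annulus_half_plane_map p z) \<le> dist z p / r0"
proof -
  have "p \<noteq> 0" using p r0 by auto
  have "annulus_half_plane_map p = (if norm p = 1 then (\<lambda>z. 1 - z / p) else (\<lambda>z. 1 - p / z))"
    by (simp add: annulus_half_plane_map_def fun_eq_iff)
  then show "annulus_half_plane_map p \<in> annulus_algebra r0"
    using \<open>p \<noteq> 0\<close>
    by (auto intro!: holomorphic_on_punctured_plane_in_annulus_algebra[OF r0(1)] holomorphic_intros)
  have inner: "norm p = r0" if "norm p \<noteq> 1" using p that by auto
  assume z: "z \<in> closed_annulus r0"
  show "0 \<le> Re (annulus_half_plane_map p z)"
    using outer_half_plane_map(1)[OF r0(1) _ _ z] inner_half_plane_map(1)[OF r0(1) inner z] r0(2)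
    by (simp add: annulus_half_plane_map_def)
  show "dist z p \<le> norm (annulus_half_plane_map p z)"
    using outer_half_plane_map(2)[OF r0(1) _ _ z] inner_half_plane_map(2)[OF r0(1) inner z] r0(2)
    by (simp add: annulus_half_plane_map_def)
  show "norm (annulus_half_plane_map p z) \<le> dist z p / r0"
    using outer_half_plane_map(3)[OF r0(1) _ _ z] inner_half_plane_map(3)[OF r0(1) inner z] r0(2)
    by (simp add: annulus_half_plane_map_def)
qed

definition annulus_kernel :: "real \<Rightarrow> complex \<Rightarrow> real \<Rightarrow> complex \<Rightarrow> complex" where
  "annulus_kernel r0 p \<rho> z = of_real (\<rho> / r0) / (of_real (\<rho> / r0) + annulus_half_plane_map p z)"

lemma annulus_kernel_properties:
  assumes r0: "0 < r0" "r0 < 1" and p: "p \<in> annulus_boundary r0" and "0 < \<rho>"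
  shows "annulus_kernel r0 p \<rho> \<in> annulus_algebra r0"
    and "z \<in> closed_annulus r0 \<Longrightarrow> 0 \<le> Re (annulus_kernel r0 p \<rho> z)"
    and "z \<in> closed_annulus r0 \<Longrightarrow> norm (annulus_kernel r0 p \<rho> z) * dist z p \<le> \<rho> / r0"
    and "z \<in> closed_annulus r0 \<Longrightarrow> dist z p < \<rho> \<Longrightarrow> 1 / 4 \<le> Re (annulus_kernel r0 p \<rho> z)"
proof -
  note w = annulus_half_plane_map_properties[OF r0 p]
  define c where "c = \<rho> / r0"
  have "0 < c" using assms by (simp add: c_def)
  have k: "annulus_kernel r0 p \<rho> z = of_real c / (of_real c + annulus_half_plane_map p z)" for z
    by (simp add: annulus_kernel_def c_def)
  show "annulus_kernel r0 p \<rho> \<in> annulus_algebra r0"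
    unfolding k[abs_def] using of_real_add_neq_zero[OF \<open>0 < c\<close> w(2)]
    by (intro annulus_algebra_divide annulus_algebra_add annulus_algebra_const w(1))
  assume z: "z \<in> closed_annulus r0"
  show "0 \<le> Re (annulus_kernel r0 p \<rho> z)"
    unfolding k by (rule Re_of_real_divide_add_nonneg[OF \<open>0 < c\<close> w(2)[OF z]])
  have "norm (annulus_kernel r0 p \<rho> z) * dist z p
      \<le> norm (annulus_kernel r0 p \<rho> z) * norm (annulus_half_plane_map p z)"
    using w(3)[OF z] by (simp add: mult_left_mono)
  also have "\<dots> \<le> c"
    unfolding k by (rule norm_of_real_divide_add_mult_le[OF \<open>0 < c\<close> w(2)[OF z]])
  finally show "norm (annulus_kernel r0 p \<rho> z) * dist z p \<le> \<rho> / r0"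
    by (simp add: c_def)
  assume "dist z p < \<rho>"
  then have "norm (annulus_half_plane_map p z) < c"
    using w(4)[OF z] r0(1) by (simp add: c_def divide_strict_right_mono order_le_less_trans)
  then show "1 / 4 \<le> Re (annulus_kernel r0 p \<rho> z)"
    unfolding k by (rule Re_of_real_divide_add_ge_quarter[OF \<open>0 < c\<close> w(2)[OF z]])
qed

lemma annulus_kernel_sum_properties:
  assumes r0: "0 < r0" "r0 < 1" and D: "finite D" "D \<subseteq> annulus_boundary r0 \<times> {0<..}"
  defines "\<phi> \<equiv> \<lambda>z. \<Sum>(p, \<rho>)\<in>D. annulus_kernel r0 p \<rho> z"
  shows "\<phi> \<in> annulus_algebra r0"
    and "z \<in> closed_annulus r0 \<Longrightarrow> 0 \<le> Re (\<phi> z)"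
    and "z \<in> closed_annulus r0 \<Longrightarrow> z \<in> (\<Union>(p, \<rho>)\<in>D. ball p \<rho>) \<Longrightarrow> 1 / 4 \<le> Re (\<phi> z)"
    and "z \<in> closed_annulus r0 \<Longrightarrow> 0 < \<delta> \<Longrightarrow> (\<forall>(p, \<rho>)\<in>D. \<delta> \<le> dist z p)
      \<Longrightarrow> norm (\<phi> z) \<le> (\<Sum>(p, \<rho>)\<in>D. \<rho>) / (r0 * \<delta>)"
proof -
  have kernel: "annulus_kernel r0 p \<rho> \<in> annulus_algebra r0"
    "z \<in> closed_annulus r0 \<Longrightarrow> 0 \<le> Re (annulus_kernel r0 p \<rho> z)"
    "z \<in> closed_annulus r0 \<Longrightarrow> norm (annulus_kernel r0 p \<rho> z) * dist z p \<le> \<rho> / r0"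
    "z \<in> closed_annulus r0 \<Longrightarrow> dist z p < \<rho> \<Longrightarrow> 1 / 4 \<le> Re (annulus_kernel r0 p \<rho> z)"
    if "(p, \<rho>) \<in> D" for p \<rho> z
    using annulus_kernel_properties[OF r0, where p = p and \<rho> = \<rho>] that D(2) by auto
  show "\<phi> \<in> annulus_algebra r0"
    unfolding \<phi>_def using D(1) kernel(1) by (intro annulus_algebra_sum) auto
  assume z: "z \<in> closed_annulus r0"
  have Re_\<phi>: "Re (\<phi> z) = (\<Sum>(p, \<rho>)\<in>D. Re (annulus_kernel r0 p \<rho> z))"
    by (simp add: \<phi>_def Re_sum case_prod_beta)
  show "0 \<le> Re (\<phi> z)"
    unfolding Re_\<phi> using kernel(2)[OF _ z] by (intro sum_nonneg) auto
  show "1 / 4 \<le> Re (\<phi> z)" if covered: "z \<in> (\<Union>(p, \<rho>)\<in>D. ball p \<rho>)"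
  proof -
    obtain p \<rho> where "(p, \<rho>) \<in> D" "z \<in> ball p \<rho>"
      using covered by blast
    then have p\<rho>: "(p, \<rho>) \<in> D" "dist z p < \<rho>"
      by (simp_all add: dist_commute)
    have "1 / 4 \<le> Re (annulus_kernel r0 p \<rho> z)"
      by (rule kernel(4)[OF p\<rho>(1) z p\<rho>(2)])
    also have "\<dots> \<le> Re (\<phi> z)"
      unfolding Re_\<phi> using member_le_sum[OF p\<rho>(1), of "\<lambda>(p, \<rho>). Re (annulus_kernel r0 p \<rho> z)"]
        kernel(2)[OF _ z] D(1) by auto
    finally show ?thesis .
  qed
  assume "0 < \<delta>" and far: "\<forall>(p, \<rho>)\<in>D. \<delta> \<le> dist z p"
  have "norm (annulus_kernel r0 p \<rho> z) \<le> \<rho> / (r0 * \<delta>)" if "(p, \<rho>) \<in> D" for p \<rho>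
  proof -
    have "\<delta> \<le> dist z p"
      using bspec[OF far that] by simp
    then have "norm (annulus_kernel r0 p \<rho> z) * \<delta> \<le> norm (annulus_kernel r0 p \<rho> z) * dist z p"
      by (simp add: mult_left_mono)
    then have "norm (annulus_kernel r0 p \<rho> z) * \<delta> \<le> \<rho> / r0"
      using kernel(3)[OF that z] by linarith
    then show ?thesis using \<open>0 < \<delta>\<close> r0(1) by (simp add: field_simps)
  qed
  then have "norm (\<phi> z) \<le> (\<Sum>(p, \<rho>)\<in>D. \<rho> / (r0 * \<delta>))"
    unfolding \<phi>_def by (intro order_trans[OF norm_sum sum_mono]) auto
  also have "\<dots> = (\<Sum>(p, \<rho>)\<in>D. \<rho>) / (r0 * \<delta>)"
    by (simp add: sum_divide_distrib case_prod_beta)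
  finally show "norm (\<phi> z) \<le> (\<Sum>(p, \<rho>)\<in>D. \<rho>) / (r0 * \<delta>)" .
qed

lemma annulus_peak_function:
  assumes r0: "0 < r0" "r0 < 1"
    and K: "compact K" "K \<subseteq> annulus_boundary r0" "circle_negligible 1 K" "circle_negligible r0 K"
    and C: "closed C" "K \<inter> C = {}" and "0 < \<epsilon>"
  obtains g where "g \<in> annulus_algebra r0"
    "\<And>z. z \<in> closed_annulus r0 \<Longrightarrow> norm (g z) \<le> 1"
    "\<And>z. z \<in> K \<Longrightarrow> norm (g z - 1) < \<epsilon>"
    "\<And>z. z \<in> C \<Longrightarrow> z \<in> closed_annulus r0 \<Longrightarrow> norm (g z) < \<epsilon>"
proof -
  obtain \<delta> where "0 < \<delta>" and sep: "\<And>x y. x \<in> K \<Longrightarrow> y \<in> C \<Longrightarrow> \<delta> \<le> dist x y"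
    using separate_compact_closed[OF K(1) C] by blast
  define \<Lambda> where "\<Lambda> = 4 / \<epsilon>"
  have "0 < \<Lambda>" using \<open>0 < \<epsilon>\<close> by (simp add: \<Lambda>_def)
  have "0 < \<epsilon> * r0 * \<delta> / \<Lambda>"
    using \<open>0 < \<epsilon>\<close> r0 \<open>0 < \<delta>\<close> \<open>0 < \<Lambda>\<close> by simp
  then obtain D where D: "finite D" "D \<subseteq> K \<times> {0<..}" "K \<subseteq> (\<Union>(p, \<rho>)\<in>D. ball p \<rho>)"
    "(\<Sum>(p, \<rho>)\<in>D. \<rho>) < \<epsilon> * r0 * \<delta> / \<Lambda>"
    using annulus_boundary_finite_disc_cover[OF r0(1) compact_imp_closed[OF K(1)] K(2-4)] by blast
  have "D \<subseteq> annulus_boundary r0 \<times> {0<..}" using D(2) K(2) by auto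
  note kernels = annulus_kernel_sum_properties[OF r0 D(1) this]
  define \<phi> where "\<phi> z = of_real \<Lambda> * (\<Sum>(p, \<rho>)\<in>D. annulus_kernel r0 p \<rho> z)" for z
  have Re_\<phi>: "0 \<le> Re (\<phi> z)" if "z \<in> closed_annulus r0" for z
    using kernels(2)[OF that] \<open>0 < \<Lambda>\<close> by (simp add: \<phi>_def)
  show ?thesis
  proof
    have "\<phi> \<in> annulus_algebra r0"
      unfolding \<phi>_def[abs_def] by (intro annulus_algebra_mult annulus_algebra_const kernels(1))
    moreover have "1 + \<phi> z \<noteq> 0" if "z \<in> closed_annulus r0" for z
      using of_real_add_neq_zero[of 1 "\<phi> z"] Re_\<phi>[OF that] by simp
    ultimately show "(\<lambda>z. \<phi> z / (1 + \<phi> z)) \<in> annulus_algebra r0"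
      by (intro annulus_algebra_divide annulus_algebra_add annulus_algebra_const)
    show "norm (\<phi> z / (1 + \<phi> z)) \<le> 1" if "z \<in> closed_annulus r0" for z
      by (rule norm_divide_one_add_le(1)[OF Re_\<phi>[OF that]])
  next
    fix z assume "z \<in> K"
    then have z: "z \<in> closed_annulus r0" using K(2) r0 by auto
    have "\<Lambda> / 4 \<le> Re (\<phi> z)"
      using kernels(3)[OF z subsetD[OF D(3) \<open>z \<in> K\<close>]] \<open>0 < \<Lambda>\<close> by (simp add: \<phi>_def)
    then have "1 < \<epsilon> * (1 + Re (\<phi> z))"
      using \<open>0 < \<epsilon>\<close> by (simp add: \<Lambda>_def field_simps)
    then have "1 / (1 + Re (\<phi> z)) < \<epsilon>"
      using Re_\<phi>[OF z] by (simp add: divide_less_eq mult.commute)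
    then show "norm (\<phi> z / (1 + \<phi> z) - 1) < \<epsilon>"
      using norm_divide_one_add_minus_one_le[OF Re_\<phi>[OF z]] by linarith
  next
    fix z assume "z \<in> C" and z: "z \<in> closed_annulus r0"
    have "\<forall>(p, \<rho>)\<in>D. \<delta> \<le> dist z p"
      using D(2) sep \<open>z \<in> C\<close> by (auto simp: dist_commute)
    then have "norm (\<Sum>(p, \<rho>)\<in>D. annulus_kernel r0 p \<rho> z) \<le> (\<Sum>(p, \<rho>)\<in>D. \<rho>) / (r0 * \<delta>)"
      by (rule kernels(4)[OF z \<open>0 < \<delta>\<close>])
    also have "\<dots> < \<epsilon> / \<Lambda>"
      using D(4) r0 \<open>0 < \<delta>\<close> \<open>0 < \<Lambda>\<close> by (simp add: field_simps)
    finally have "norm (\<phi> z) < \<epsilon>"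
      using \<open>0 < \<Lambda>\<close> by (simp add: \<phi>_def norm_mult field_simps)
    then show "norm (\<phi> z / (1 + \<phi> z)) < \<epsilon>"
      using norm_divide_one_add_le(2)[OF Re_\<phi>[OF z]] by linarith
  qed
qed

section \<open>Approximation and interpolation\<close>

lemma annulus_algebra_approx_on_circle:
  assumes r0: "0 < r0" "r0 < 1" and rs: "{r, s} = {1, r0}"
    and K: "compact K" "K \<subseteq> sphere 0 r" "circle_negligible r K"
    and f: "continuous_on K f" and "0 < \<epsilon>"
  obtains h where "h \<in> annulus_algebra r0"
    "\<And>z. z \<in> K \<Longrightarrow> norm (h z - f z) < \<epsilon>"
    "\<And>z. z \<in> sphere 0 s \<Longrightarrow> norm (h z) < \<epsilon>"
proof -
  have rs_cases: "r = 1 \<and> s = r0 \<or> r = r0 \<and> s = 1"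
    using rs r0 by (auto simp: doubleton_eq_iff)
  then have "0 < r" "0 \<le> s" "K \<inter> sphere 0 s = {}" "K \<subseteq> annulus_boundary r0"
    and s: "sphere 0 s \<subseteq> closed_annulus r0"
    using K(2) r0 by auto
  then have "circle_negligible s K"
    by (intro circle_negligible_disjoint)
  then have null: "circle_negligible 1 K" "circle_negligible r0 K"
    using rs_cases K(3) by auto
  obtain p where p: "polynomial_function p" "\<And>z. z \<in> K \<Longrightarrow> norm (f z - p z) < \<epsilon> / 2"
    using Stone_Weierstrass_polynomial_function[OF K(1) f, of "\<epsilon> / 2"] \<open>0 < \<epsilon>\<close> by auto
  obtain P where P: "P holomorphic_on - {0}" "\<And>z. z \<in> sphere 0 r \<Longrightarrow> P z = p z"
    using polynomial_function_on_sphere_holomorphic[OF p(1) \<open>0 < r\<close>] by blast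
  have P_alg: "P \<in> annulus_algebra r0"
    by (rule holomorphic_on_punctured_plane_in_annulus_algebra[OF r0(1) P(1)])
  obtain H where "0 < H" and H: "\<And>z. z \<in> closed_annulus r0 \<Longrightarrow> norm (P z) \<le> H"
    using annulus_algebra_bounded[OF P_alg] by blast
  have "0 < \<epsilon> / (2 * H)" using \<open>0 < \<epsilon>\<close> \<open>0 < H\<close> by simp
  then obtain g where g: "g \<in> annulus_algebra r0"
    "\<And>z. z \<in> K \<Longrightarrow> norm (g z - 1) < \<epsilon> / (2 * H)"
    "\<And>z. z \<in> sphere 0 s \<Longrightarrow> z \<in> closed_annulus r0 \<Longrightarrow> norm (g z) < \<epsilon> / (2 * H)"
    by (rule annulus_peak_function[OF r0 K(1) \<open>K \<subseteq> annulus_boundary r0\<close> null closed_sphere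
        \<open>K \<inter> sphere 0 s = {}\<close>]) (rule that; assumption)
  have H_mult: "norm (P z) * a \<le> \<epsilon> / 2" if "z \<in> closed_annulus r0" "a < \<epsilon> / (2 * H)" "0 \<le> a"
    for z a
  proof -
    have "norm (P z) * a \<le> H * (\<epsilon> / (2 * H))"
      using H[OF that(1)] that(2,3) \<open>0 < H\<close> by (intro mult_mono) auto
    then show ?thesis using \<open>0 < H\<close> by simp
  qed
  show ?thesis
  proof
    show "(\<lambda>z. P z * g z) \<in> annulus_algebra r0"
      by (rule annulus_algebra_mult[OF P_alg g(1)])
  next
    fix z assume "z \<in> K"
    then have z: "z \<in> closed_annulus r0" "P z = p z"
      using \<open>K \<subseteq> annulus_boundary r0\<close> K(2) P(2) r0 by auto
    have eq: "P z * g z - f z = P z * (g z - 1) + (p z - f z)"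
      using z(2) by (simp add: algebra_simps)
    have "norm (P z * g z - f z) \<le> norm (P z) * norm (g z - 1) + norm (p z - f z)"
      unfolding eq by (metis norm_mult norm_triangle_ineq)
    also have "\<dots> < \<epsilon> / 2 + \<epsilon> / 2"
      using H_mult[OF z(1) g(2)[OF \<open>z \<in> K\<close>]] p(2)[OF \<open>z \<in> K\<close>]
      by (simp add: norm_minus_commute)
    finally show "norm (P z * g z - f z) < \<epsilon>" by simp
  next
    fix z :: complex assume "z \<in> sphere 0 s"
    then have "norm (P z) * norm (g z) \<le> \<epsilon> / 2"
      using H_mult s g(3) by auto
    then show "norm (P z * g z) < \<epsilon>"
      using \<open>0 < \<epsilon>\<close> by (simp add: norm_mult)
  qed
qed

lemma annulus_algebra_approx:
  assumes r0: "0 < r0" "r0 < 1"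
    and E: "compact E" "E \<subseteq> annulus_boundary r0" "circle_negligible 1 E" "circle_negligible r0 E"
    and f: "continuous_on E f" and "0 < \<epsilon>"
  obtains h where "h \<in> annulus_algebra r0" "\<And>z. z \<in> E \<Longrightarrow> norm (h z - f z) < \<epsilon>"
proof -
  have "0 < \<epsilon> / 2" using \<open>0 < \<epsilon>\<close> by simp
  obtain h1 where h1: "h1 \<in> annulus_algebra r0"
    "\<And>z. z \<in> E \<inter> sphere 0 1 \<Longrightarrow> norm (h1 z - f z) < \<epsilon> / 2"
    "\<And>z. z \<in> sphere 0 r0 \<Longrightarrow> norm (h1 z) < \<epsilon> / 2"
    using annulus_algebra_approx_on_circle[OF r0 _ compact_Int_closed[OF E(1) closed_sphere] _
        circle_negligible_subset[OF E(3)] continuous_on_subset[OF f] \<open>0 < \<epsilon> / 2\<close>]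
    by blast
  obtain h2 where h2: "h2 \<in> annulus_algebra r0"
    "\<And>z. z \<in> E \<inter> sphere 0 r0 \<Longrightarrow> norm (h2 z - f z) < \<epsilon> / 2"
    "\<And>z. z \<in> sphere 0 1 \<Longrightarrow> norm (h2 z) < \<epsilon> / 2"
    using annulus_algebra_approx_on_circle[OF r0 _ compact_Int_closed[OF E(1) closed_sphere] _
        circle_negligible_subset[OF E(4)] continuous_on_subset[OF f] \<open>0 < \<epsilon> / 2\<close>]
    by blast
  show ?thesis
  proof
    show "(\<lambda>z. h1 z + h2 z) \<in> annulus_algebra r0"
      by (rule annulus_algebra_add[OF h1(1) h2(1)])
    fix z assume "z \<in> E"
    then consider "z \<in> E \<inter> sphere 0 1" | "z \<in> E \<inter> sphere 0 r0"
      using E(2) by blast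
    then show "norm (h1 z + h2 z - f z) < \<epsilon>"
    proof cases
      case 1
      then have "norm (h2 z) < \<epsilon> / 2" using h2(3) by blast
      then show ?thesis
        using h1(2)[OF 1] norm_triangle_ineq[of "h1 z - f z" "h2 z"] by (simp add: algebra_simps)
    next
      case 2
      then have "norm (h1 z) < \<epsilon> / 2" using h1(3) by blast
      then show ?thesis
        using h2(2)[OF 2] norm_triangle_ineq[of "h2 z - f z" "h1 z"] by (simp add: algebra_simps)
    qed
  qed
qed

lemma compact_continuous_pos_bounded_below:
  fixes u :: "'a::topological_space \<Rightarrow> real"
  assumes "compact S" "continuous_on S u" "\<forall>z\<in>S. 0 < u z"
  shows "\<exists>\<delta>>0. \<forall>z\<in>S. \<delta> \<le> u z"
proof (cases "S = {}")
  case True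
  then show ?thesis by (intro exI[of _ 1]) simp
next
  case False
  then obtain x where "x \<in> S" "\<forall>y\<in>S. u x \<le> u y"
    using continuous_attains_inf[OF assms(1) False assms(2)] by blast
  then show ?thesis using assms(3) by blast
qed

text \<open>Multiplying by a peak function that is close to \<open>1\<close> on \<open>E\<close> and small where \<open>|h|\<close> comes
  close to \<open>M\<close> pushes \<open>|h|\<close> below \<open>M\<close> on the whole boundary.\<close>

lemma annulus_algebra_peak_damping:
  assumes r0: "0 < r0" "r0 < 1"
    and E: "compact E" "E \<subseteq> annulus_boundary r0" "circle_negligible 1 E" "circle_negligible r0 E"
    and h: "h \<in> annulus_algebra r0"
    and M: "continuous_on (annulus_boundary r0) M" "\<And>z. z \<in> annulus_boundary r0 \<Longrightarrow> 0 < M z"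
    and hM: "\<And>z. z \<in> E \<Longrightarrow> norm (h z) < M z" and "0 < \<epsilon>"
  obtains F where "F \<in> annulus_algebra r0" "\<And>z. z \<in> E \<Longrightarrow> norm (F z - h z) < \<epsilon>"
    "\<And>z. z \<in> annulus_boundary r0 \<Longrightarrow> norm (F z) < M z"
proof -
  have B: "compact (annulus_boundary r0)" "annulus_boundary r0 \<subseteq> closed_annulus r0"
    using r0 by auto
  have gap: "continuous_on (annulus_boundary r0) (\<lambda>z. M z - norm (h z))"
    using h B(2) M(1) unfolding annulus_algebra_def
    by (intro continuous_intros) (auto intro: continuous_on_subset)
  then have "\<exists>\<delta>>0. \<forall>z\<in>E. \<delta> \<le> M z - norm (h z)"
    using hM by (intro compact_continuous_pos_bounded_below[OF E(1)]) (auto intro: continuous_on_subset[OF _ E(2)])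
  then obtain \<delta> where "0 < \<delta>" and \<delta>: "\<And>z. z \<in> E \<Longrightarrow> \<delta> \<le> M z - norm (h z)"
    by blast
  have "\<exists>m>0. \<forall>z\<in>annulus_boundary r0. m \<le> M z"
    using M by (intro compact_continuous_pos_bounded_below[OF B(1)]) simp_all
  then obtain m where "0 < m" and m: "\<And>z. z \<in> annulus_boundary r0 \<Longrightarrow> m \<le> M z"
    by blast
  obtain H where "0 < H" and H: "\<And>z. z \<in> closed_annulus r0 \<Longrightarrow> norm (h z) \<le> H"
    using annulus_algebra_bounded[OF h] by blast
  define C where "C = {z \<in> annulus_boundary r0. M z - norm (h z) \<le> \<delta> / 2}"
  have "closed (annulus_boundary r0 \<inter> (\<lambda>z. M z - norm (h z)) -` {..\<delta> / 2})"
    using gap B(1) by (intro continuous_closed_preimage) (auto intro: compact_imp_closed)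
  moreover have "annulus_boundary r0 \<inter> (\<lambda>z. M z - norm (h z)) -` {..\<delta> / 2} = C"
    by (auto simp: C_def)
  ultimately have "closed C" by simp
  have "E \<inter> C = {}"
    using \<delta> \<open>0 < \<delta>\<close> by (force simp: C_def)
  define \<epsilon>' where "\<epsilon>' = min \<epsilon> m / (2 * H)"
  have "0 < \<epsilon>'" using \<open>0 < \<epsilon>\<close> \<open>0 < m\<close> \<open>0 < H\<close> by (simp add: \<epsilon>'_def)
  obtain g where g: "g \<in> annulus_algebra r0" "\<And>z. z \<in> closed_annulus r0 \<Longrightarrow> norm (g z) \<le> 1"
    "\<And>z. z \<in> E \<Longrightarrow> norm (g z - 1) < \<epsilon>'"
    "\<And>z. z \<in> C \<Longrightarrow> z \<in> closed_annulus r0 \<Longrightarrow> norm (g z) < \<epsilon>'"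
    by (rule annulus_peak_function[OF r0 E \<open>closed C\<close> \<open>E \<inter> C = {}\<close> \<open>0 < \<epsilon>'\<close>])
      (rule that; assumption)
  have H\<epsilon>': "norm (h z) * a \<le> min \<epsilon> m / 2" if "z \<in> closed_annulus r0" "0 \<le> a" "a < \<epsilon>'" for z a
  proof -
    have "norm (h z) * a \<le> H * \<epsilon>'"
      using H[OF that(1)] that(2,3) \<open>0 < H\<close> by (intro mult_mono) auto
    then show ?thesis using \<open>0 < H\<close> by (simp add: \<epsilon>'_def)
  qed
  show ?thesis
  proof
    show "(\<lambda>z. h z * g z) \<in> annulus_algebra r0"
      by (rule annulus_algebra_mult[OF h g(1)])
  next
    fix z assume "z \<in> E"
    then have "norm (h z) * norm (g z - 1) \<le> min \<epsilon> m / 2"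
      using E(2) B(2) g(3) by (intro H\<epsilon>') auto
    moreover have "h z * g z - h z = h z * (g z - 1)"
      by (simp add: algebra_simps)
    ultimately show "norm (h z * g z - h z) < \<epsilon>"
      using \<open>0 < \<epsilon>\<close> by (simp add: norm_mult)
  next
    fix z assume zB: "z \<in> annulus_boundary r0"
    then have z: "z \<in> closed_annulus r0" using B(2) by blast
    show "norm (h z * g z) < M z"
    proof (cases "z \<in> C")
      case True
      then have "norm (h z) * norm (g z) \<le> min \<epsilon> m / 2"
        using z g(4) by (intro H\<epsilon>') auto
      then show ?thesis using m[OF zB] \<open>0 < m\<close> by (simp add: norm_mult)
    next
      case False
      then have "norm (h z) < M z" using zB \<open>0 < \<delta>\<close> by (auto simp: C_def)
      moreover have "norm (h z * g z) \<le> norm (h z)"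
        unfolding norm_mult using g(2)[OF z] by (simp add: mult_left_le)
      ultimately show ?thesis by linarith
    qed
  qed
qed

lemma annulus_algebra_bounded_approx:
  assumes r0: "0 < r0" "r0 < 1"
    and E: "compact E" "E \<subseteq> annulus_boundary r0" "circle_negligible 1 E" "circle_negligible r0 E"
    and f: "continuous_on E f"
    and M: "continuous_on (annulus_boundary r0) M" "\<And>z. z \<in> annulus_boundary r0 \<Longrightarrow> 0 < M z"
    and fM: "\<And>z. z \<in> E \<Longrightarrow> norm (f z) < M z" and "0 < \<epsilon>"
  obtains F where "F \<in> annulus_algebra r0" "\<And>z. z \<in> E \<Longrightarrow> norm (F z - f z) < \<epsilon>"
    "\<And>z. z \<in> annulus_boundary r0 \<Longrightarrow> norm (F z) < M z"
proof -
  have "continuous_on E (\<lambda>z. M z - norm (f z))"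
    using continuous_on_subset[OF M(1) E(2)] f by (intro continuous_intros)
  then have "\<exists>\<delta>>0. \<forall>z\<in>E. \<delta> \<le> M z - norm (f z)"
    using fM by (intro compact_continuous_pos_bounded_below[OF E(1)]) auto
  then obtain \<delta> where "0 < \<delta>" and \<delta>: "\<And>z. z \<in> E \<Longrightarrow> \<delta> \<le> M z - norm (f z)"
    by blast
  have "0 < min \<epsilon> \<delta> / 2" using \<open>0 < \<epsilon>\<close> \<open>0 < \<delta>\<close> by simp
  then obtain h where h: "h \<in> annulus_algebra r0" "\<And>z. z \<in> E \<Longrightarrow> norm (h z - f z) < min \<epsilon> \<delta> / 2"
    using annulus_algebra_approx[OF r0 E f] by blast
  have hM: "norm (h z) < M z" if "z \<in> E" for z
    using norm_triangle_ineq[of "f z" "h z - f z"] h(2)[OF that] \<delta>[OF that] \<open>0 < \<delta>\<close> by simp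
  have "0 < \<epsilon> / 2" using \<open>0 < \<epsilon>\<close> by simp
  obtain F where F: "F \<in> annulus_algebra r0" "\<And>z. z \<in> E \<Longrightarrow> norm (F z - h z) < \<epsilon> / 2"
    "\<And>z. z \<in> annulus_boundary r0 \<Longrightarrow> norm (F z) < M z"
    by (rule annulus_algebra_peak_damping[OF r0 E h(1) M hM \<open>0 < \<epsilon> / 2\<close>]) (assumption | rule that)+
  show ?thesis
  proof (rule that[OF F(1) _ F(3)])
    fix z assume "z \<in> E"
    then show "norm (F z - f z) < \<epsilon>"
      using norm_triangle_ineq[of "F z - h z" "h z - f z"] F(2) h(2) by fastforce
  qed
qed

lemma annulus_algebra_interpolating_sequence:
  assumes r0: "0 < r0" "r0 < 1"
    and E: "compact E" "E \<subseteq> annulus_boundary r0" "circle_negligible 1 E" "circle_negligible r0 E"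
    and f: "continuous_on E f"
    and "0 < e" and G\<^sub>0: "G\<^sub>0 \<in> annulus_algebra r0" "\<And>z. z \<in> E \<Longrightarrow> norm (f z - G\<^sub>0 z) < e"
    and d: "continuous_on (annulus_boundary r0) d" "\<And>z. z \<in> annulus_boundary r0 \<Longrightarrow> 0 < d z"
      "\<And>z. z \<in> E \<Longrightarrow> 4 * e \<le> d z"
  obtains G where "\<And>n. G n \<in> annulus_algebra r0"
    "\<And>n z. z \<in> E \<Longrightarrow> norm (f z - G n z) < e * (1 / 2) ^ n"
    "\<And>n z. z \<in> annulus_boundary r0 \<Longrightarrow> norm (G n z - G\<^sub>0 z) \<le> d z / 2"
    "\<And>n z. z \<in> annulus_boundary r0 \<Longrightarrow> norm (G (Suc n) z - G n z) \<le> d z * (1 / 2) ^ (n + 2)"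
proof -
  have "E \<subseteq> closed_annulus r0" using E(2) r0 by auto
  define P where "P n G \<longleftrightarrow> G \<in> annulus_algebra r0
      \<and> (\<forall>z\<in>E. norm (f z - G z) < e * (1 / 2) ^ n)
      \<and> (\<forall>z\<in>annulus_boundary r0. norm (G z - G\<^sub>0 z) \<le> (1 - (1 / 2) ^ n) * d z / 2)" for n G
  define Q where "Q n G G' \<longleftrightarrow> (\<forall>z\<in>annulus_boundary r0. norm (G' z - G z) \<le> d z * (1 / 2) ^ (n + 2))"
    for n and G G' :: "complex \<Rightarrow> complex"
  have "P 0 G\<^sub>0"
    using G\<^sub>0 by (simp add: P_def)
  moreover have "\<exists>G'. P (Suc n) G' \<and> Q n G G'" if "P n G" for n G
  proof -
    have G: "G \<in> annulus_algebra r0" "\<And>z. z \<in> E \<Longrightarrow> norm (f z - G z) < e * (1 / 2) ^ n"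
      "\<And>z. z \<in> annulus_boundary r0 \<Longrightarrow> norm (G z - G\<^sub>0 z) \<le> (1 - (1 / 2) ^ n) * d z / 2"
      using that by (auto simp: P_def)
    have err_cont: "continuous_on E (\<lambda>z. f z - G z)"
      using f G(1) \<open>E \<subseteq> closed_annulus r0\<close> unfolding annulus_algebra_def
      by (intro continuous_intros) (auto intro: continuous_on_subset)
    have bound_cont: "continuous_on (annulus_boundary r0) (\<lambda>z. d z * (1 / 2) ^ (n + 2))"
      using d(1) by (intro continuous_intros)
    have bound_pos: "0 < d z * (1 / 2) ^ (n + 2)" if "z \<in> annulus_boundary r0" for z
      using d(2)[OF that] by simp
    have err_bound: "norm (f z - G z) < d z * (1 / 2) ^ (n + 2)" if "z \<in> E" for z
    proof -
      have "e * (1 / 2) ^ n \<le> d z * (1 / 2) ^ (n + 2)"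
        using d(3)[OF that] by (simp add: power_add mult_right_mono)
      then show ?thesis using G(2)[OF that] by linarith
    qed
    have err_pos: "0 < e * (1 / 2) ^ Suc n"
      using \<open>0 < e\<close> by simp
    obtain u where u: "u \<in> annulus_algebra r0"
      "\<And>z. z \<in> E \<Longrightarrow> norm (u z - (f z - G z)) < e * (1 / 2) ^ Suc n"
      "\<And>z. z \<in> annulus_boundary r0 \<Longrightarrow> norm (u z) < d z * (1 / 2) ^ (n + 2)"
      by (rule annulus_algebra_bounded_approx[OF r0 E err_cont bound_cont bound_pos err_bound err_pos])
        (assumption | rule that)+
    have "P (Suc n) (\<lambda>z. G z + u z)"
      unfolding P_def
    proof (intro conjI ballI)
      show "(\<lambda>z. G z + u z) \<in> annulus_algebra r0"
        by (rule annulus_algebra_add[OF G(1) u(1)])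
      fix z
      show "norm (f z - (G z + u z)) < e * (1 / 2) ^ Suc n" if "z \<in> E"
        using u(2)[OF that] by (simp add: norm_minus_commute algebra_simps)
      assume z: "z \<in> annulus_boundary r0"
      have "norm (G z + u z - G\<^sub>0 z) \<le> norm (G z - G\<^sub>0 z) + norm (u z)"
        using norm_triangle_ineq[of "G z - G\<^sub>0 z" "u z"] by (simp add: algebra_simps)
      also have "\<dots> \<le> (1 - (1 / 2) ^ n) * d z / 2 + d z * (1 / 2) ^ (n + 2)"
        using G(3)[OF z] u(3)[OF z] by (auto intro: add_mono less_imp_le)
      also have "\<dots> = (1 - (1 / 2) ^ Suc n) * d z / 2"
        by (simp add: power_add field_simps)
      finally show "norm (G z + u z - G\<^sub>0 z) \<le> (1 - (1 / 2) ^ Suc n) * d z / 2" .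
    qed
    moreover have "Q n G (\<lambda>z. G z + u z)"
      using u(3) by (simp add: Q_def less_imp_le)
    ultimately show ?thesis by blast
  qed
  ultimately obtain G where PG: "\<And>n. P n (G n)" and QG: "\<And>n. Q n (G n) (G (Suc n))"
    using dependent_nat_choice[of P Q] by blast
  show ?thesis
  proof (rule that)
    show "G n \<in> annulus_algebra r0" for n
      using PG[of n] by (simp add: P_def)
    show "norm (f z - G n z) < e * (1 / 2) ^ n" if "z \<in> E" for n z
      using PG[of n] that by (simp add: P_def)
    show "norm (G (Suc n) z - G n z) \<le> d z * (1 / 2) ^ (n + 2)" if "z \<in> annulus_boundary r0" for n z
      using QG[of n] that by (simp add: Q_def)
    show "norm (G n z - G\<^sub>0 z) \<le> d z / 2" if "z \<in> annulus_boundary r0" for n z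
    proof -
      have "(1 - (1 / 2) ^ n) * d z \<le> d z"
        using d(2)[OF that] by (simp add: mult_left_le_one_le)
      moreover have "norm (G n z - G\<^sub>0 z) \<le> (1 - (1 / 2) ^ n) * d z / 2"
        using PG[of n] that unfolding P_def by blast
      ultimately show ?thesis by linarith
    qed
  qed
qed

text \<open>With \<open>d = M - |G\<^sub>0|\<close>, the room left by a first bounded approximant \<open>G\<^sub>0\<close>, the corrections
  of the interpolating sequence add up to at most \<open>d/2\<close> on the boundary, so the limit stays
  below \<open>M\<close>.\<close>

lemma annulus_algebra_interpolation:
  assumes r0: "0 < r0" "r0 < 1"
    and E: "compact E" "E \<subseteq> annulus_boundary r0" "circle_negligible 1 E" "circle_negligible r0 E"
    and f: "continuous_on E f"
    and M: "continuous_on (annulus_boundary r0) M" "\<And>z. z \<in> annulus_boundary r0 \<Longrightarrow> 0 < M z"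
    and fM: "\<And>z. z \<in> E \<Longrightarrow> norm (f z) < M z"
  obtains F where "F \<in> annulus_algebra r0" "\<And>z. z \<in> annulus_boundary r0 \<Longrightarrow> norm (F z) < M z"
    "\<And>z. z \<in> E \<Longrightarrow> F z = f z"
proof -
  have B: "compact (annulus_boundary r0)" "annulus_boundary r0 \<subseteq> closed_annulus r0"
    using r0 by auto
  have "continuous_on E (\<lambda>z. M z - norm (f z))"
    using continuous_on_subset[OF M(1) E(2)] f by (intro continuous_intros)
  then have "\<exists>\<delta>>0. \<forall>z\<in>E. \<delta> \<le> M z - norm (f z)"
    using fM by (intro compact_continuous_pos_bounded_below[OF E(1)]) auto
  then obtain \<delta> where "0 < \<delta>" and \<delta>: "\<And>z. z \<in> E \<Longrightarrow> \<delta> \<le> M z - norm (f z)"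
    by blast
  have "0 < \<delta> / 8" using \<open>0 < \<delta>\<close> by simp
  obtain G\<^sub>0 where G\<^sub>0: "G\<^sub>0 \<in> annulus_algebra r0" "\<And>z. z \<in> E \<Longrightarrow> norm (G\<^sub>0 z - f z) < \<delta> / 8"
    "\<And>z. z \<in> annulus_boundary r0 \<Longrightarrow> norm (G\<^sub>0 z) < M z"
    by (rule annulus_algebra_bounded_approx[OF r0 E f M fM \<open>0 < \<delta> / 8\<close>]) (assumption | rule that)+
  define d where "d z = M z - norm (G\<^sub>0 z)" for z
  have d_pos: "0 < d z" if "z \<in> annulus_boundary r0" for z
    using G\<^sub>0(3)[OF that] by (simp add: d_def)
  have d_cont: "continuous_on (annulus_boundary r0) d"
    using M(1) G\<^sub>0(1) B(2) unfolding d_def annulus_algebra_def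
    by (intro continuous_intros) (auto intro: continuous_on_subset)
  have d_E: "4 * (\<delta> / 8) \<le> d z" if "z \<in> E" for z
  proof -
    have "norm (G\<^sub>0 z) \<le> norm (f z) + norm (G\<^sub>0 z - f z)"
      using norm_triangle_ineq[of "f z" "G\<^sub>0 z - f z"] by simp
    then show ?thesis
      using norm_ge_zero[of "G\<^sub>0 z - f z"] G\<^sub>0(2)[OF that] \<delta>[OF that] unfolding d_def by linarith
  qed
  have "norm (f z - G\<^sub>0 z) < \<delta> / 8" if "z \<in> E" for z
    using G\<^sub>0(2)[OF that] by (simp add: norm_minus_commute)
  then obtain G where G: "\<And>n. G n \<in> annulus_algebra r0"
    "\<And>n z. z \<in> E \<Longrightarrow> norm (f z - G n z) < \<delta> / 8 * (1 / 2) ^ n"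
    "\<And>n z. z \<in> annulus_boundary r0 \<Longrightarrow> norm (G n z - G\<^sub>0 z) \<le> d z / 2"
    "\<And>n z. z \<in> annulus_boundary r0 \<Longrightarrow> norm (G (Suc n) z - G n z) \<le> d z * (1 / 2) ^ (n + 2)"
    using annulus_algebra_interpolating_sequence[OF r0 E f \<open>0 < \<delta> / 8\<close> G\<^sub>0(1) _ d_cont d_pos d_E] by blast
  obtain C where "\<forall>z\<in>annulus_boundary r0. \<bar>d z\<bar> \<le> C"
    using compact_imp_bounded[OF compact_continuous_image[OF d_cont B(1)]]
    unfolding bounded_real by blast
  then have C: "d z \<le> C" if "z \<in> annulus_boundary r0" for z
    using that abs_le_D1 by blast
  have "norm (G (Suc n) z - G n z) \<le> C * (1 / 2) ^ (n + 2)" if "z \<in> annulus_boundary r0" for n z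
  proof -
    have "d z * (1 / 2) ^ (n + 2) \<le> C * (1 / 2) ^ (n + 2)"
      using C[OF that] by (rule mult_right_mono) simp
    then show ?thesis using G(4)[OF that, of n] by linarith
  qed
  moreover have "summable (\<lambda>n. C * (1 / 2) ^ (n + 2) :: real)"
    by (simp add: summable_geometric power_add)
  ultimately obtain F where F: "F \<in> annulus_algebra r0"
    "\<And>z. z \<in> closed_annulus r0 \<Longrightarrow> (\<lambda>n. G n z) \<longlonglongrightarrow> F z"
    by (rule annulus_algebra_Cauchy_limit[OF r0 G(1)]) (assumption | rule that)+
  show ?thesis
  proof
    show "F \<in> annulus_algebra r0" by (fact F(1))
  next
    fix z assume "z \<in> E"
    have "(\<lambda>n. \<delta> / 8 * (1 / 2) ^ n) \<longlonglongrightarrow> 0"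
      by (intro tendsto_mult_right_zero LIMSEQ_power_zero) simp
    then have "(\<lambda>n. G n z - f z) \<longlonglongrightarrow> 0"
      by (rule Lim_null_comparison[rotated])
        (use G(2) \<open>z \<in> E\<close> in \<open>auto simp: norm_minus_commute less_imp_le\<close>)
    then have "(\<lambda>n. G n z) \<longlonglongrightarrow> f z"
      by (rule LIM_zero_cancel)
    then show "F z = f z"
      using F(2) \<open>z \<in> E\<close> E(2) B(2) by (blast intro: LIMSEQ_unique)
  next
    fix z assume z: "z \<in> annulus_boundary r0"
    have "(\<lambda>n. norm (G n z - G\<^sub>0 z)) \<longlonglongrightarrow> norm (F z - G\<^sub>0 z)"
      using B(2) z by (intro tendsto_norm tendsto_diff F(2) tendsto_const) auto
    then have "norm (F z - G\<^sub>0 z) \<le> d z / 2"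
      using Lim_bounded[of _ _ 0] G(3)[OF z] by blast
    then show "norm (F z) < M z"
      using norm_triangle_ineq[of "G\<^sub>0 z" "F z - G\<^sub>0 z"] d_pos[OF z] by (simp add: d_def)
  qed
qed

lemma continuous_on_real_of_ereal_min:
  fixes M :: "'a::topological_space \<Rightarrow> ereal"
  assumes "continuous_on S M" "\<And>z. z \<in> S \<Longrightarrow> 0 < M z"
  shows "continuous_on S (\<lambda>z. real_of_ereal (min (M z) (ereal c)))"
proof (rule continuous_on_compose2[OF continuous_on_real])
  show "continuous_on S (\<lambda>z. min (M z) (ereal c))"
    using assms(1) by (intro continuous_intros)
  show "(\<lambda>z. min (M z) (ereal c)) ` S \<subseteq> UNIV - {\<infinity>, - \<infinity>}"
    using assms(2) by (force simp: min_def)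
qed

text \<open>Truncating \<open>M\<close> at a bound \<open>c\<close> of \<open>h\<close> on \<open>T\<close> removes the value \<open>\<infinity>\<close>.\<close>

lemma ereal_continuous_real_minorant:
  fixes M :: "'a::topological_space \<Rightarrow> ereal" and h :: "'a \<Rightarrow> real"
  assumes M: "continuous_on S M" "\<And>z. z \<in> S \<Longrightarrow> 0 < M z"
    and h: "compact T" "continuous_on T h" "\<And>z. z \<in> T \<Longrightarrow> ereal (h z) < M z"
  obtains m where "continuous_on S m" "\<And>z. z \<in> S \<Longrightarrow> 0 < m z"
    "\<And>z. z \<in> S \<Longrightarrow> ereal (m z) \<le> M z" "\<And>z. z \<in> T \<Longrightarrow> h z < m z"
proof -
  obtain b where b: "\<forall>x\<in>h ` T. norm x \<le> b"
    using compact_imp_bounded[OF compact_continuous_image[OF h(2,1)]] unfolding bounded_iff by blast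
  define c where "c = \<bar>b\<bar> + 1"
  have "0 < c" and c: "\<And>z. z \<in> T \<Longrightarrow> h z < c"
    using b by (force simp: c_def)+
  define m where "m z = real_of_ereal (min (M z) (ereal c))" for z
  have m: "ereal (m z) = min (M z) (ereal c)" if "- \<infinity> < M z" for z
    using that by (cases "M z") (auto simp: m_def min_def)
  show ?thesis
  proof
    show "continuous_on S m"
      unfolding m_def[abs_def] by (rule continuous_on_real_of_ereal_min[OF M])
    show "0 < m z" "ereal (m z) \<le> M z" if "z \<in> S" for z
    proof -
      have eq: "ereal (m z) = min (M z) (ereal c)"
        using M(2)[OF that] by (intro m) (simp add: order_less_trans[of _ 0])
      then have "0 < ereal (m z)"
        using M(2)[OF that] \<open>0 < c\<close> by simp
      then show "0 < m z" by simp
      show "ereal (m z) \<le> M z" unfolding eq by simp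
    qed
    show "h z < m z" if "z \<in> T" for z
    proof -
      have "- \<infinity> < M z"
        using h(3)[OF that] by (cases "M z") auto
      then have "ereal (m z) = min (M z) (ereal c)"
        by (rule m)
      then have "ereal (h z) < ereal (m z)"
        using h(3)[OF that] c[OF that] by simp
      then show ?thesis by simp
    qed
  qed
qed

theorem proposition2p4:
  fixes r0 :: real and E :: "complex set" and f :: "complex \<Rightarrow> complex"
    and M :: "complex \<Rightarrow> ereal"
  assumes "0 < r0" "r0 < 1"
    and "closed E" "E \<subseteq> sphere 0 1 \<union> sphere 0 r0"
    and "annulus_bdry_null r0 E"
    and "continuous_on E f"
    and "continuous_on (sphere 0 1 \<union> sphere 0 r0) M"
    and "\<forall>z \<in> sphere 0 1 \<union> sphere 0 r0. 0 < M z"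
    and "\<forall>z \<in> E. ereal (cmod (f z)) < M z"
  shows "\<exists>F. continuous_on {z. r0 \<le> cmod z \<and> cmod z \<le> 1} F
           \<and> F holomorphic_on {z. r0 < cmod z \<and> cmod z < 1}
           \<and> (\<forall>z \<in> sphere 0 1 \<union> sphere 0 r0. ereal (cmod (F z)) < M z)
           \<and> (\<forall>z \<in> E. F z = f z)"
proof -
  note r0 = assms(1,2)
  have "E \<subseteq> cball 0 1"
    using assms(4) r0 by auto
  then have "compact E"
    using assms(3) bounded_subset[OF bounded_cball] by (simp add: compact_eq_bounded_closed)
  have null: "circle_negligible 1 E" "circle_negligible r0 E"
    using assms(5) r0 unfolding annulus_bdry_null_def
    by (auto intro: circle_null_imp_circle_negligible)
  have "continuous_on E (\<lambda>z. norm (f z))"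
    by (intro continuous_intros assms(6))
  then obtain m where m: "continuous_on (annulus_boundary r0) m"
    "\<And>z. z \<in> annulus_boundary r0 \<Longrightarrow> 0 < m z" "\<And>z. z \<in> annulus_boundary r0 \<Longrightarrow> ereal (m z) \<le> M z"
    "\<And>z. z \<in> E \<Longrightarrow> norm (f z) < m z"
    using ereal_continuous_real_minorant[OF assms(7) _ \<open>compact E\<close>] assms(8,9) by blast
  obtain F where F: "F \<in> annulus_algebra r0" "\<And>z. z \<in> annulus_boundary r0 \<Longrightarrow> norm (F z) < m z"
    "\<And>z. z \<in> E \<Longrightarrow> F z = f z"
    by (rule annulus_algebra_interpolation[OF r0 \<open>compact E\<close> assms(4) null assms(6) m(1,2,4)])
      (assumption | rule that)+
  have "ereal (norm (F z)) < M z" if "z \<in> annulus_boundary r0" for z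
  proof -
    have "ereal (norm (F z)) < ereal (m z)" using F(2)[OF that] by simp
    then show ?thesis using m(3)[OF that] by (rule order_less_le_trans)
  qed
  then show ?thesis
    using F unfolding annulus_algebra_def by blast
qed

end
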